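(* Let $q\in K_+$ and let $m$ be an irreducible Metzler $n\times n$ matrix. Define $l(x)=\dfrac{\langle q,mx\rangle}{\langle q,x\rangle}$ for $x\in K_+$. Then $l$ is Lipschitz continuous from $(K_+,d)$ to $(\mathbb R,|\cdot|)$, where $d$ is Hilbert's projective metric, with Lipschitz constant satisfying \[ \mathrm{Lip}\,l\le \sup_{x\in K_0}\inf_{a\in\mathbb R}\frac{\langle q,|m-a\,\mathrm{id}|\,x\rangle}{\langle q,x\rangle}. \]
   Context: A matrix is Metzler if its off-diagonal entries are nonnegative; it is irreducible if for every partition $\{1,\dots,n\}=I\sqcup J$ into nonempty sets some $m_{ij}$ with $i\in I$, $j\in J$ is positive. $K$ is the nonnegative orthant, $K_+$ the positive orthant, $K_0=K\setminus\{0\}$. Hilbert's projective metric on $K_+$ is $d(x,y)=\log\max_{1\le i,j\le n}\frac{x_iy_j}{x_jy_i}$. For a matrix $m=(m_{ij})$, $|m|=(|m_{ij}|)$ denotes the entrywise absolute value. *)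

theory Defs
  imports "HOL-Analysis.Analysis"
begin

definition metzler :: "real^'n^'n \<Rightarrow> bool" where
  "metzler m \<longleftrightarrow> (\<forall>i j. i \<noteq> j \<longrightarrow> m $ i $ j \<ge> 0)"

definition irreducible_mat :: "real^'n^'n \<Rightarrow> bool" where
  "irreducible_mat m \<longleftrightarrow>
     (\<forall>I J. I \<noteq> {} \<longrightarrow> J \<noteq> {} \<longrightarrow> I \<inter> J = {} \<longrightarrow> I \<union> J = UNIV \<longrightarrow>
        (\<exists>i\<in>I. \<exists>j\<in>J. m $ i $ j > 0))"

definition pos_orthant :: "(real^'n) set" where
  "pos_orthant = {x. \<forall>i. x $ i > 0}"

definition nonneg_orthant0 :: "(real^'n) set" where
  "nonneg_orthant0 = {x. (\<forall>i. x $ i \<ge> 0) \<and> x \<noteq> 0}"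

definition hilbert_metric :: "real^'n \<Rightarrow> real^'n \<Rightarrow> real" where
  "hilbert_metric x y = ln (Max {x $ i * y $ j / (x $ j * y $ i) | i j. True})"

definition mat_abs :: "real^'n^'m \<Rightarrow> real^'n^'m" where
  "mat_abs m = (\<chi> i j. \<bar>m $ i $ j\<bar>)"

end

theory Submission
  imports Defs
begin

text \<open>
  Join y to x by the path z(t)_i = y_i exp(t u_i) with u_i = ln (x_i / y_i).
  By the mean value theorem, l x - l y is the derivative of l along this path at some point z:
  a cross difference of the form \<open>\<langle>q,mw\<rangle>\<langle>q,z\<rangle> - \<langle>q,mz\<rangle>\<langle>q,w\<rangle>\<close> divided by \<open>\<langle>q,z\<rangle>\<^sup>2\<close>, where w_i = u_i z_i.
  The cross difference does not change when m is replaced by m - a id or w by w - c z.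
  Choosing c as the midpoint of the range of u, which has length at most d(x,y), gives
  \<open>|w - c z| \<le> d(x,y)/2 \<cdot> z\<close>, and the triangle inequality bounds the cross difference by
  \<open>d(x,y) \<langle>q,|m - a id| z\<rangle> \<langle>q,z\<rangle>\<close>.
\<close>

lemma inner_matrix_vector_sum:
  fixes q w :: "real^'n" and A :: "real^'n^'n"
  shows "q \<bullet> (A *v w) = (\<Sum>i\<in>UNIV. \<Sum>j\<in>UNIV. q$i * A$i$j * w$j)"
  by (simp add: inner_vec_def matrix_vector_mult_def sum_distrib_left mult.assoc)

lemma abs_inner_matrix_vector_le:
  fixes q z w :: "real^'n" and M :: "real^'n^'n"
  assumes q: "\<forall>i. q$i \<ge> 0" and w: "\<forall>j. \<bar>w$j\<bar> \<le> r * z$j"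
  shows "\<bar>q \<bullet> (M *v w)\<bar> \<le> r * (q \<bullet> (mat_abs M *v z))"
proof -
  have "\<bar>q \<bullet> (M *v w)\<bar> \<le> (\<Sum>i\<in>UNIV. \<bar>\<Sum>j\<in>UNIV. q$i * M$i$j * w$j\<bar>)"
    unfolding inner_matrix_vector_sum by (rule sum_abs)
  also have "\<dots> \<le> (\<Sum>i\<in>UNIV. \<Sum>j\<in>UNIV. \<bar>q$i * M$i$j * w$j\<bar>)"
    by (intro sum_mono sum_abs)
  also have "\<dots> \<le> (\<Sum>i\<in>UNIV. \<Sum>j\<in>UNIV. r * (q$i * \<bar>M$i$j\<bar> * z$j))"
  proof (intro sum_mono)
    fix i j
    have "\<bar>q$i * M$i$j * w$j\<bar> = (q$i * \<bar>M$i$j\<bar>) * \<bar>w$j\<bar>"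
      using q by (simp add: abs_mult)
    also have "\<dots> \<le> (q$i * \<bar>M$i$j\<bar>) * (r * z$j)"
      using q w by (intro mult_left_mono) auto
    finally show "\<bar>q$i * M$i$j * w$j\<bar> \<le> r * (q$i * \<bar>M$i$j\<bar> * z$j)"
      by (simp add: algebra_simps)
  qed
  also have "\<dots> = r * (q \<bullet> (mat_abs M *v z))"
    unfolding inner_matrix_vector_sum by (simp add: mat_abs_def sum_distrib_left)
  finally show ?thesis .
qed

lemma abs_inner_le:
  fixes q z w :: "real^'n"
  assumes q: "\<forall>i. q$i \<ge> 0" and w: "\<forall>j. \<bar>w$j\<bar> \<le> r * z$j"
  shows "\<bar>q \<bullet> w\<bar> \<le> r * (q \<bullet> z)"
proof -
  have "\<bar>q \<bullet> w\<bar> \<le> (\<Sum>i\<in>UNIV. q$i * \<bar>w$i\<bar>)"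
    unfolding inner_vec_def using q by (simp add: abs_mult sum_abs[THEN order_trans])
  also have "\<dots> \<le> (\<Sum>i\<in>UNIV. q$i * (r * z$i))"
    using q w by (intro sum_mono mult_left_mono) auto
  also have "\<dots> = r * (q \<bullet> z)"
    by (simp add: inner_vec_def sum_distrib_left algebra_simps)
  finally show ?thesis .
qed

lemma inner_mat_abs_nonneg:
  fixes q z :: "real^'n" and M :: "real^'n^'n"
  assumes "\<forall>i. q$i \<ge> 0" and "\<forall>j. z$j \<ge> 0"
  shows "0 \<le> q \<bullet> (mat_abs M *v z)"
  unfolding inner_matrix_vector_sum using assms by (auto simp: mat_abs_def intro!: sum_nonneg)

lemma inner_pos_if_nonneg_orthant0:
  fixes q x :: "real^'n"
  assumes q: "\<forall>i. q$i > 0" and x: "x \<in> nonneg_orthant0"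
  shows "q \<bullet> x > 0"
proof -
  from x have x_nonneg: "\<forall>i. x$i \<ge> 0" and "x \<noteq> 0" by (auto simp: nonneg_orthant0_def)
  then obtain k where "x$k > 0" by (metis order_less_le vec_eq_iff zero_index)
  then have "0 < q$k * x$k" using q by simp
  also have "\<dots> \<le> (\<Sum>i\<in>UNIV. q$i * x$i)"
    by (rule member_le_sum) (use q x_nonneg in \<open>auto simp: less_imp_le\<close>)
  finally show ?thesis by (simp add: inner_vec_def)
qed

lemma pos_orthant_subset_nonneg_orthant0: "pos_orthant \<subseteq> nonneg_orthant0"
  unfolding pos_orthant_def nonneg_orthant0_def
  by (auto intro: less_imp_le)

lemma cross_difference_shift_matrix:
  fixes q z w :: "real^'n" and m :: "real^'n^'n"
  shows "(q \<bullet> (m *v w)) * (q \<bullet> z) - (q \<bullet> (m *v z)) * (q \<bullet> w)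
       = (q \<bullet> ((m - a *\<^sub>R mat 1) *v w)) * (q \<bullet> z) - (q \<bullet> ((m - a *\<^sub>R mat 1) *v z)) * (q \<bullet> w)"
proof -
  have shift: "(m - a *\<^sub>R mat 1) *v v = m *v v - a *\<^sub>R v" for v :: "real^'n"
    by (simp add: matrix_vector_mult_diff_rdistrib flip: scaleR_matrix_vector_assoc)
  show ?thesis unfolding shift by (simp add: inner_diff_right algebra_simps)
qed

lemma cross_difference_shift_vector:
  fixes q z w :: "real^'n" and m :: "real^'n^'n"
  shows "(q \<bullet> (m *v w)) * (q \<bullet> z) - (q \<bullet> (m *v z)) * (q \<bullet> w)
       = (q \<bullet> (m *v (w - c *\<^sub>R z))) * (q \<bullet> z) - (q \<bullet> (m *v z)) * (q \<bullet> (w - c *\<^sub>R z))"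
  by (simp add: matrix_vector_mult_diff_distrib inner_diff_right algebra_simps
      flip: matrix_scaleR_vector_ac)

lemma abs_cross_difference_le:
  fixes q z w :: "real^'n" and m :: "real^'n^'n"
  assumes q: "\<forall>i. q$i \<ge> 0" and z: "\<forall>j. z$j \<ge> 0" and w: "\<forall>j. \<bar>w$j\<bar> \<le> r * z$j"
    and r: "r \<ge> 0"
  shows "\<bar>(q \<bullet> (m *v w)) * (q \<bullet> z) - (q \<bullet> (m *v z)) * (q \<bullet> w)\<bar>
     \<le> 2 * r * (q \<bullet> (mat_abs (m - a *\<^sub>R mat 1) *v z)) * (q \<bullet> z)"
proof -
  let ?M = "m - a *\<^sub>R mat 1"
  let ?P = "q \<bullet> (mat_abs ?M *v z)"
  have P_nonneg: "0 \<le> ?P" by (rule inner_mat_abs_nonneg[OF q z])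
  have qz_nonneg: "0 \<le> q \<bullet> z" unfolding inner_vec_def using q z by (auto intro!: sum_nonneg)
  have Mw: "\<bar>q \<bullet> (?M *v w)\<bar> \<le> r * ?P" by (rule abs_inner_matrix_vector_le[OF q w])
  have qw: "\<bar>q \<bullet> w\<bar> \<le> r * (q \<bullet> z)" by (rule abs_inner_le[OF q w])
  have Mz: "\<bar>q \<bullet> (?M *v z)\<bar> \<le> 1 * ?P" by (rule abs_inner_matrix_vector_le[OF q]) (use z in auto)
  have "\<bar>(q \<bullet> (?M *v w)) * (q \<bullet> z) - (q \<bullet> (?M *v z)) * (q \<bullet> w)\<bar>
      \<le> \<bar>q \<bullet> (?M *v w)\<bar> * (q \<bullet> z) + \<bar>q \<bullet> (?M *v z)\<bar> * \<bar>q \<bullet> w\<bar>"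
    using qz_nonneg abs_triangle_ineq4[of "(q \<bullet> (?M *v w)) * (q \<bullet> z)" "(q \<bullet> (?M *v z)) * (q \<bullet> w)"]
    by (simp add: abs_mult)
  also have "\<dots> \<le> (r * ?P) * (q \<bullet> z) + ?P * (r * (q \<bullet> z))"
    using Mw qw Mz qz_nonneg P_nonneg r by (intro add_mono mult_mono) auto
  finally show ?thesis
    unfolding cross_difference_shift_matrix[of q m w z a] by (simp add: algebra_simps)
qed

lemma bdd_above_INF_abs_shift_ratio:
  fixes q :: "real^'n" and m :: "real^'n^'n"
  assumes q: "\<forall>i. q$i > 0"
  shows "bdd_above ((\<lambda>x. INF a\<in>(UNIV::real set).
           (q \<bullet> (mat_abs (m - a *\<^sub>R mat 1) *v x)) / (q \<bullet> x)) ` nonneg_orthant0)"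
proof -
  define K where "K = Max (range (\<lambda>j. (\<Sum>i\<in>UNIV. q$i * \<bar>m$i$j\<bar>) / q$j))"
  have column_le: "(\<Sum>i\<in>UNIV. q$i * \<bar>m$i$j\<bar>) \<le> K * q$j" for j
  proof -
    have "(\<Sum>i\<in>UNIV. q$i * \<bar>m$i$j\<bar>) / q$j \<le> K" unfolding K_def by (rule Max_ge) auto
    then show ?thesis using q by (simp add: divide_le_eq)
  qed
  show ?thesis
  proof (rule bdd_aboveI, clarify)
    fix x :: "real^'n" assume x: "x \<in> nonneg_orthant0"
    then have x_nonneg: "\<forall>j. x$j \<ge> 0" by (simp add: nonneg_orthant0_def)
    let ?F = "\<lambda>a. (q \<bullet> (mat_abs (m - a *\<^sub>R mat 1) *v x)) / (q \<bullet> x)"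
    have qx: "q \<bullet> x > 0" by (rule inner_pos_if_nonneg_orthant0[OF q x])
    have "q \<bullet> (mat_abs m *v x) = (\<Sum>j\<in>UNIV. (\<Sum>i\<in>UNIV. q$i * \<bar>m$i$j\<bar>) * x$j)"
      unfolding inner_matrix_vector_sum mat_abs_def
      by (subst sum.swap) (simp add: sum_distrib_right)
    also have "\<dots> \<le> (\<Sum>j\<in>UNIV. K * q$j * x$j)"
      using column_le x_nonneg by (intro sum_mono mult_right_mono) auto
    also have "\<dots> = K * (q \<bullet> x)" by (simp add: inner_vec_def sum_distrib_left mult.assoc)
    finally have "?F 0 \<le> K" using qx by (simp add: divide_le_eq)
    moreover have "(INF a. ?F a) \<le> ?F 0"
      using qx q x_nonneg
      by (intro cINF_lower bdd_belowI[where m=0])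
         (auto intro!: divide_nonneg_pos inner_mat_abs_nonneg simp: less_imp_le)
    ultimately show "(INF a. ?F a) \<le> K" by linarith
  qed
qed

lemma log_ratio_diff_le_hilbert_metric:
  fixes x y :: "real^'n"
  assumes x: "x \<in> pos_orthant" and y: "y \<in> pos_orthant"
  shows "ln (x$i / y$i) - ln (x$j / y$j) \<le> hilbert_metric x y"
proof -
  have xp: "\<forall>i. x$i > 0" and yp: "\<forall>i. y$i > 0" using x y by (auto simp: pos_orthant_def)
  define S where "S = {x $ i * y $ j / (x $ j * y $ i) | i j. True}"
  have "S = (\<lambda>(i, j). x $ i * y $ j / (x $ j * y $ i)) ` UNIV"
    unfolding S_def by auto
  then have "finite S" by simp
  moreover have "x $ i * y $ j / (x $ j * y $ i) \<in> S" unfolding S_def by blast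
  ultimately have le_Max: "x $ i * y $ j / (x $ j * y $ i) \<le> Max S" by (rule Max_ge)
  have "ln (x$i / y$i) - ln (x$j / y$j) = ln ((x$i / y$i) / (x$j / y$j))"
    by (rule ln_divide_pos[symmetric]) (use xp yp in auto)
  also have "(x$i / y$i) / (x$j / y$j) = x $ i * y $ j / (x $ j * y $ i)"
    using xp yp by (simp add: field_simps)
  also have "ln \<dots> \<le> ln (Max S)"
  proof -
    have "0 < x $ i * y $ j / (x $ j * y $ i)" using xp yp by simp
    then show ?thesis using le_Max by simp
  qed
  finally show ?thesis by (simp add: hilbert_metric_def S_def)
qed

lemma log_ratio_near_midpoint:
  fixes x y :: "real^'n"
  assumes "x \<in> pos_orthant" and "y \<in> pos_orthant"
  obtains c where "\<And>i. \<bar>ln (x$i / y$i) - c\<bar> \<le> hilbert_metric x y / 2"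
proof -
  define u where "u i = ln (x$i / y$i)" for i
  have "Max (range u) \<in> range u" and "Min (range u) \<in> range u" by simp_all
  then obtain i1 j1 where i1: "u i1 = Max (range u)" and j1: "u j1 = Min (range u)"
    by (metis imageE)
  have range_le: "u i1 - u j1 \<le> hilbert_metric x y"
    unfolding u_def by (rule log_ratio_diff_le_hilbert_metric[OF assms])
  have "\<bar>u i - (u i1 + u j1) / 2\<bar> \<le> hilbert_metric x y / 2" for i
  proof -
    have "u j1 \<le> u i" and "u i \<le> u i1" unfolding i1 j1 by simp_all
    with range_le show ?thesis unfolding abs_le_iff by (auto simp: field_simps)
  qed
  then show ?thesis using that unfolding u_def by blast
qed

lemma hilbert_metric_nonneg:
  "x \<in> pos_orthant \<Longrightarrow> y \<in> pos_orthant \<Longrightarrow> 0 \<le> hilbert_metric x y"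
  using log_ratio_diff_le_hilbert_metric[of x y i i for i] by simp

lemma has_real_derivative_inner_exp_path:
  fixes q y u :: "real^'n" and A :: "real^'n^'n"
  shows "((\<lambda>t. q \<bullet> (A *v (\<chi> i. y$i * exp (t * u$i)))) has_real_derivative
           q \<bullet> (A *v (\<chi> i. u$i * (y$i * exp (t * u$i))))) (at t)"
proof -
  have "((\<lambda>t. \<Sum>i\<in>UNIV. \<Sum>j\<in>UNIV. q$i * A$i$j * (y$j * exp (t * u$j))) has_real_derivative
         (\<Sum>i\<in>UNIV. \<Sum>j\<in>UNIV. q$i * A$i$j * (u$j * (y$j * exp (t * u$j))))) (at t)"
    by (auto intro!: derivative_eq_intros sum.cong simp: algebra_simps)
  then show ?thesis unfolding inner_matrix_vector_sum by simp
qed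

lemma ratio_mean_value_exp_path:
  fixes q y u :: "real^'n" and m :: "real^'n^'n"
  assumes q: "\<forall>i. q$i > 0" and y: "y \<in> pos_orthant"
  obtains z w where "z \<in> pos_orthant" and "w = (\<chi> i. u$i * z$i)"
    and "(q \<bullet> (m *v (\<chi> i. y$i * exp (u$i)))) / (q \<bullet> (\<chi> i. y$i * exp (u$i)))
           - (q \<bullet> (m *v y)) / (q \<bullet> y)
         = ((q \<bullet> (m *v w)) * (q \<bullet> z) - (q \<bullet> (m *v z)) * (q \<bullet> w)) / (q \<bullet> z)\<^sup>2"
proof -
  define z where "z t = (\<chi> i. y$i * exp (t * u$i))" for t
  define w where "w t = (\<chi> i. u$i * z t $ i)" for t
  have z_pos: "z t \<in> pos_orthant" for t using y by (simp add: z_def pos_orthant_def)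
  have qz: "q \<bullet> z t > 0" for t
    using inner_pos_if_nonneg_orthant0[OF q] z_pos pos_orthant_subset_nonneg_orthant0 by blast
  have dD: "((\<lambda>t. q \<bullet> z t) has_real_derivative q \<bullet> w t) (at t)" for t
    using has_real_derivative_inner_exp_path[of q "mat 1" y u t] by (simp add: z_def w_def)
  have dN: "((\<lambda>t. q \<bullet> (m *v z t)) has_real_derivative q \<bullet> (m *v w t)) (at t)" for t
    using has_real_derivative_inner_exp_path[of q m y u t] by (simp add: z_def w_def)
  define g where "g t = (q \<bullet> (m *v z t)) / (q \<bullet> z t)" for t
  define g' where "g' t = ((q \<bullet> (m *v w t)) * (q \<bullet> z t) - (q \<bullet> (m *v z t)) * (q \<bullet> w t))
                          / ((q \<bullet> z t) * (q \<bullet> z t))" for t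
  have "(g has_real_derivative g' t) (at t)" for t
    unfolding g_def g'_def by (rule DERIV_divide[OF dN dD]) (use qz[of t] in simp)
  then obtain \<xi> where "g 1 - g 0 = (1 - 0) * g' \<xi>"
    using MVT2[of 0 1 g g'] by auto
  then have "g 1 - g 0 = g' \<xi>" by simp
  moreover have "z 1 = (\<chi> i. y$i * exp (u$i))" and "z 0 = y" by (simp_all add: z_def vec_eq_iff)
  ultimately show ?thesis using that[OF z_pos w_def] by (simp add: g_def g'_def power2_eq_square)
qed

lemma abs_ratio_diff_le_hilbert_metric:
  fixes q x y :: "real^'n" and m :: "real^'n^'n"
  assumes q: "\<forall>i. q$i > 0" and x: "x \<in> pos_orthant" and y: "y \<in> pos_orthant"
  obtains z where "z \<in> nonneg_orthant0"
    and "\<And>a. \<bar>(q \<bullet> (m *v x)) / (q \<bullet> x) - (q \<bullet> (m *v y)) / (q \<bullet> y)\<bar>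
               \<le> hilbert_metric x y * ((q \<bullet> (mat_abs (m - a *\<^sub>R mat 1) *v z)) / (q \<bullet> z))"
proof -
  let ?d = "hilbert_metric x y"
  obtain c where c: "\<And>i. \<bar>ln (x$i / y$i) - c\<bar> \<le> ?d / 2"
    using log_ratio_near_midpoint[OF x y] by blast
  define u where "u = (\<chi> i. ln (x$i / y$i))"
  have x_eq: "(\<chi> i. y$i * exp (u$i)) = x"
    using x y by (simp add: u_def pos_orthant_def vec_eq_iff less_imp_neq[symmetric])
  obtain z w where z: "z \<in> pos_orthant" and w: "w = (\<chi> i. u$i * z$i)"
    and mvt: "(q \<bullet> (m *v x)) / (q \<bullet> x) - (q \<bullet> (m *v y)) / (q \<bullet> y)
        = ((q \<bullet> (m *v w)) * (q \<bullet> z) - (q \<bullet> (m *v z)) * (q \<bullet> w)) / (q \<bullet> z)\<^sup>2"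
    using ratio_mean_value_exp_path[OF q y, of u m] unfolding x_eq by blast
  have z_pos: "\<forall>i. z$i > 0" using z by (simp add: pos_orthant_def)
  have z_nonneg: "z \<in> nonneg_orthant0" using z pos_orthant_subset_nonneg_orthant0 by blast
  have qz: "q \<bullet> z > 0" by (rule inner_pos_if_nonneg_orthant0[OF q z_nonneg])
  have "\<bar>(w - c *\<^sub>R z)$j\<bar> \<le> ?d / 2 * z$j" for j
  proof -
    have "(w - c *\<^sub>R z)$j = z$j * (ln (x$j / y$j) - c)"
      by (simp add: w u_def algebra_simps)
    then have "\<bar>(w - c *\<^sub>R z)$j\<bar> = z$j * \<bar>ln (x$j / y$j) - c\<bar>"
      using z_pos by (simp add: abs_mult less_imp_le)
    also have "\<dots> \<le> z$j * (?d / 2)" using c z_pos by (intro mult_left_mono) (auto simp: less_imp_le)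
    finally show ?thesis by (simp add: mult.commute)
  qed
  moreover have "0 \<le> ?d" by (rule hilbert_metric_nonneg[OF x y])
  ultimately have cross: "\<bar>(q \<bullet> (m *v w)) * (q \<bullet> z) - (q \<bullet> (m *v z)) * (q \<bullet> w)\<bar>
      \<le> ?d * (q \<bullet> (mat_abs (m - a *\<^sub>R mat 1) *v z)) * (q \<bullet> z)" for a
    using abs_cross_difference_le[of q z "w - c *\<^sub>R z" "?d / 2" m a] q z_pos
    unfolding cross_difference_shift_vector[of q m w z c] by (simp add: less_imp_le)
  show ?thesis
  proof (rule that[OF z_nonneg])
    fix a
    show "\<bar>(q \<bullet> (m *v x)) / (q \<bullet> x) - (q \<bullet> (m *v y)) / (q \<bullet> y)\<bar>
        \<le> ?d * ((q \<bullet> (mat_abs (m - a *\<^sub>R mat 1) *v z)) / (q \<bullet> z))"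
      unfolding mvt using cross[of a] qz
      by (simp add: abs_divide divide_le_eq power2_eq_square mult.assoc)
  qed
qed

lemma le_mult_INF:
  fixes d t :: real and f :: "'a \<Rightarrow> real"
  assumes d: "0 \<le> d" and t: "\<And>a. t \<le> d * f a"
  shows "t \<le> d * (INF a. f a)"
proof (cases "d = 0")
  case True
  then show ?thesis using t[of undefined] by simp
next
  case False
  with d have "d > 0" by simp
  then have "t / d \<le> (INF a. f a)"
    using t by (intro cINF_greatest) (auto simp: divide_le_eq mult.commute)
  with \<open>d > 0\<close> show ?thesis by (simp add: divide_le_eq mult.commute)
qed

theorem lemma1:
  fixes q :: "real^'n" and m :: "real^'n^'n"
  assumes "q \<in> pos_orthant" and "metzler m" and "irreducible_mat m"
  defines "l \<equiv> (\<lambda>x. (q \<bullet> (m *v x)) / (q \<bullet> x))"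
    and "C \<equiv> (SUP x\<in>nonneg_orthant0. INF a\<in>(UNIV::real set).
                 (q \<bullet> (mat_abs (m - a *\<^sub>R mat 1) *v x)) / (q \<bullet> x))"
  shows "bdd_above ((\<lambda>x. INF a\<in>(UNIV::real set).
                 (q \<bullet> (mat_abs (m - a *\<^sub>R mat 1) *v x)) / (q \<bullet> x)) ` nonneg_orthant0)
    \<and> (\<forall>x\<in>pos_orthant. \<forall>y\<in>pos_orthant. \<bar>l x - l y\<bar> \<le> C * hilbert_metric x y)"
proof -
  have q: "\<forall>i. q$i > 0" using assms(1) by (simp add: pos_orthant_def)
  let ?F = "\<lambda>x a. (q \<bullet> (mat_abs (m - a *\<^sub>R mat 1) *v x)) / (q \<bullet> x)"
  have bdd: "bdd_above ((\<lambda>x. INF a. ?F x a) ` nonneg_orthant0)"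
    by (rule bdd_above_INF_abs_shift_ratio[OF q])
  have "\<bar>l x - l y\<bar> \<le> C * hilbert_metric x y" if x: "x \<in> pos_orthant" and y: "y \<in> pos_orthant" for x y
  proof -
    have d: "0 \<le> hilbert_metric x y" by (rule hilbert_metric_nonneg[OF x y])
    obtain z where z: "z \<in> nonneg_orthant0"
      and bound: "\<And>a. \<bar>l x - l y\<bar> \<le> hilbert_metric x y * ?F z a"
      using abs_ratio_diff_le_hilbert_metric[OF q x y, of m] unfolding l_def by blast
    have "\<bar>l x - l y\<bar> \<le> hilbert_metric x y * (INF a. ?F z a)"
      by (rule le_mult_INF[OF d bound])
    also have "\<dots> \<le> hilbert_metric x y * C"
      unfolding C_def by (intro mult_left_mono cSUP_upper[OF z bdd] d)
    finally show ?thesis by (simp add: mult.commute)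
  qed
  with bdd show ?thesis by blast
qed

end
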